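(* In the setting below, if there is a subinterval $[t_1,t_2]\subset(0,1]$ with $t_1<t_2$ on which $Z_1(t)$ stays on one of the coordinate axes, then both $Z_1(t)$ and $Z_2(t)$ stay on the coordinate axes (each on an axis) for all $t\in(0,1]$.
   Context: Planar three-body problem with masses $m_1=m_2=m_3=1$, $\chi=\{q=(q_1,q_2,q_3)\in(\mathbb{R}^2)^3: q_1+q_2+q_3=0\}$, action $\mathcal{A}(q)=\int_0^1\big(\tfrac12\sum|\dot q_i|^2+\sum_{i<j}\frac{1}{|q_i-q_j|}\big)dt$. Let $Q_{S_4}=\{q: q_1=q_2=(-a_2,0),\ q_3=(2a_2,0),\ a_2\ge0\}$ and $Q_{E_1}=\{q: q_1=(0,-2b_1),\ q_2=(-b_2,b_1),\ q_3=(b_2,b_1),\ b_1,b_2\in\mathbb{R}\}$. Let $q$ minimize $\mathcal{A}$ over $\{q\in H^1([0,1],\chi): q(0)\in Q_{S_4},\ q(1)\in Q_{E_1}\}$; it is collision-free for $t\in(0,1]$ and there satisfies Newton's equations $\ddot q_i=\sum_{j\ne i}\frac{q_j-q_i}{|q_j-q_i|^3}$. Jacobi coordinates: $Z_1=q_1-q_2$, $Z_2=q_3-\frac{q_1+q_2}{2}$. *)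

theory Defs
  imports "HOL-Analysis.Analysis"
begin

text \<open>Planar three-body problem with unit masses.\<close>

definition H1_path :: "(real \<Rightarrow> complex) \<Rightarrow> bool" where
  "H1_path f \<longleftrightarrow> (\<exists>g. g absolutely_integrable_on {0..1} \<and>
       (\<lambda>t. (norm (g t))\<^sup>2) integrable_on {0..1} \<and>
       (\<forall>t\<in>{0..1}. f t = f 0 + integral {0..t} g))"

definition pot :: "complex \<Rightarrow> complex \<Rightarrow> ennreal" where
  "pot x y = (if x = y then \<infinity> else ennreal (1 / cmod (x - y)))"

definition action :: "(real \<Rightarrow> complex) \<Rightarrow> (real \<Rightarrow> complex) \<Rightarrow> (real \<Rightarrow> complex) \<Rightarrow> ennreal" where
  "action q1 q2 q3 = (\<integral>\<^sup>+ t. indicator {0..1::real} t *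
      (ennreal (1/2 * ((cmod (vector_derivative q1 (at t)))\<^sup>2
                     + (cmod (vector_derivative q2 (at t)))\<^sup>2
                     + (cmod (vector_derivative q3 (at t)))\<^sup>2))
       + pot (q1 t) (q2 t) + pot (q1 t) (q3 t) + pot (q2 t) (q3 t)) \<partial>lborel)"

definition in_Q_S4 :: "complex \<Rightarrow> complex \<Rightarrow> complex \<Rightarrow> bool" where
  "in_Q_S4 x1 x2 x3 \<longleftrightarrow> (\<exists>a::real. a \<ge> 0 \<and> x1 = complex_of_real (-a) \<and>
      x2 = complex_of_real (-a) \<and> x3 = complex_of_real (2*a))"

definition in_Q_E1 :: "complex \<Rightarrow> complex \<Rightarrow> complex \<Rightarrow> bool" where
  "in_Q_E1 x1 x2 x3 \<longleftrightarrow> (\<exists>b1 b2::real. x1 = Complex 0 (-2*b1) \<and>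
      x2 = Complex (-b2) b1 \<and> x3 = Complex b2 b1)"

definition admissible :: "(real \<Rightarrow> complex) \<Rightarrow> (real \<Rightarrow> complex) \<Rightarrow> (real \<Rightarrow> complex) \<Rightarrow> bool" where
  "admissible q1 q2 q3 \<longleftrightarrow> H1_path q1 \<and> H1_path q2 \<and> H1_path q3 \<and>
     (\<forall>t\<in>{0..1}. q1 t + q2 t + q3 t = 0) \<and>
     in_Q_S4 (q1 0) (q2 0) (q3 0) \<and> in_Q_E1 (q1 1) (q2 1) (q3 1)"

definition force :: "complex \<Rightarrow> complex \<Rightarrow> complex \<Rightarrow> complex" where
  "force x y z = (y - x) / complex_of_real ((cmod (y - x))^3)
               + (z - x) / complex_of_real ((cmod (z - x))^3)"

definition on_x_axis :: "complex \<Rightarrow> bool" where "on_x_axis z \<longleftrightarrow> Im z = 0"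
definition on_y_axis :: "complex \<Rightarrow> bool" where "on_y_axis z \<longleftrightarrow> Re z = 0"

end

theory Submission
  imports Defs
begin

text \<open>Newton's equations form an autonomous first order system whose vector field is locally
  Lipschitz away from collisions, so a collision-free motion is determined by its state at one
  instant; in particular two motions that agree on an open time interval agree everywhere.
  Differentiating \<open>Z\<^sub>1\<close> twice on the given interval shows that the vertical forces on
  bodies 1 and 2 coincide there, and an explicit computation turns this into: at every instant
  \<open>Z\<^sub>2\<close> lies on an axis; by continuity it stays on one fixed axis on a subinterval. There the
  configuration is invariant under a reflection of the plane, possibly combined with the exchange
  of bodies 1 and 2. Reflected motions are motions, so by uniqueness this invariance, and with it
  the position of \<open>Z\<^sub>1\<close> and \<open>Z\<^sub>2\<close> on the axes, persists for all times.\<close>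

definition locally_lipschitz_at :: "('a::metric_space \<Rightarrow> 'b::metric_space) \<Rightarrow> 'a \<Rightarrow> bool" where
  "locally_lipschitz_at f x \<longleftrightarrow> (\<exists>e>0. \<exists>C. C-lipschitz_on (ball x e) f)"

lemma (in bounded_linear) locally_lipschitz_at: "locally_lipschitz_at f x"
  unfolding locally_lipschitz_at_def using lipschitz_boundE by (meson zero_less_one)

lemma locally_lipschitz_at_compose:
  assumes f: "locally_lipschitz_at f x" and g: "locally_lipschitz_at g (f x)"
  shows "locally_lipschitz_at (\<lambda>y. g (f y)) x"
proof -
  obtain e C where e: "e > 0" and C: "C-lipschitz_on (ball x e) f"
    using f unfolding locally_lipschitz_at_def by blast
  obtain d D where d: "d > 0" and D: "D-lipschitz_on (ball (f x) d) g"
    using g unfolding locally_lipschitz_at_def by blast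
  define e' where "e' = min e (d / (C + 1))"
  have C0: "0 \<le> C" using lipschitz_on_nonneg[OF C] .
  have e': "0 < e'" "e' \<le> e" using e d C0 by (auto simp: e'_def)
  have "f ` ball x e' \<subseteq> ball (f x) d"
  proof
    fix z assume "z \<in> f ` ball x e'"
    then obtain y where y: "y \<in> ball x e'" "z = f y" by blast
    have "dist (f x) (f y) \<le> C * dist x y"
      using lipschitz_onD[OF C] y(1) e' e by auto
    also have "\<dots> \<le> C * e'" using y(1) C0 by (intro mult_left_mono) auto
    also have "\<dots> < d"
    proof -
      have "C * e' \<le> C * (d / (C + 1))" using C0 by (intro mult_left_mono) (auto simp: e'_def)
      also have "\<dots> < d" using C0 d by (simp add: field_simps)
      finally show ?thesis .
    qed
    finally show "z \<in> ball (f x) d" using y(2) by simp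
  qed
  then have "(D * C)-lipschitz_on (ball x e') (\<lambda>y. g (f y))"
    using e' by (intro lipschitz_on_compose2 lipschitz_on_subset[OF C] lipschitz_on_subset[OF D]) auto
  then show ?thesis unfolding locally_lipschitz_at_def using e' by blast
qed

lemma locally_lipschitz_at_add:
  fixes f g :: "'a::metric_space \<Rightarrow> 'b::real_normed_vector"
  assumes "locally_lipschitz_at f x" "locally_lipschitz_at g x"
  shows "locally_lipschitz_at (\<lambda>y. f y + g y) x"
proof -
  obtain e C d D where "e > 0" "C-lipschitz_on (ball x e) f" "d > 0" "D-lipschitz_on (ball x d) g"
    using assms unfolding locally_lipschitz_at_def by blast
  then have "(C + D)-lipschitz_on (ball x (min e d)) (\<lambda>y. f y + g y)"
    by (intro lipschitz_on_add) (auto intro: lipschitz_on_subset)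
  then show ?thesis unfolding locally_lipschitz_at_def using \<open>e > 0\<close> \<open>d > 0\<close>
    by (metis min_less_iff_conj)
qed

lemma locally_lipschitz_at_Pair:
  assumes "locally_lipschitz_at f x" "locally_lipschitz_at g x"
  shows "locally_lipschitz_at (\<lambda>y. (f y, g y)) x"
proof -
  obtain e C d D where "e > 0" "C-lipschitz_on (ball x e) f" "d > 0" "D-lipschitz_on (ball x d) g"
    using assms unfolding locally_lipschitz_at_def by blast
  then have "(sqrt (C\<^sup>2 + D\<^sup>2))-lipschitz_on (ball x (min e d)) (\<lambda>y. (f y, g y))"
    by (intro lipschitz_on_Pair) (auto intro: lipschitz_on_subset)
  then show ?thesis unfolding locally_lipschitz_at_def using \<open>e > 0\<close> \<open>d > 0\<close>
    by (metis min_less_iff_conj)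
qed

lemma ode_solutions_agree_near:
  fixes y z :: "real \<Rightarrow> 'a::real_normed_vector"
  assumes I: "is_interval I"
    and y: "\<And>t. t \<in> I \<Longrightarrow> (y has_vector_derivative F (y t)) (at t within I)"
    and z: "\<And>t. t \<in> I \<Longrightarrow> (z has_vector_derivative F (z t)) (at t within I)"
    and lip: "locally_lipschitz_at F (y s)" and s: "s \<in> I" "y s = z s"
  shows "\<exists>h>0. \<forall>t\<in>I. dist t s < h \<longrightarrow> y t = z t"
proof -
  obtain e L where e: "e > 0" and L: "L-lipschitz_on (ball (y s) e) F"
    using lip unfolding locally_lipschitz_at_def by blast
  have L0: "0 \<le> L" using lipschitz_on_nonneg[OF L] .
  have "continuous (at s within I) y" "continuous (at s within I) z"
    using y[OF s(1)] z[OF s(1)] by (auto intro: has_vector_derivative_continuous)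
  then obtain d where d: "d > 0" "\<And>t. t \<in> I \<Longrightarrow> dist t s < d \<Longrightarrow> y t \<in> ball (y s) e \<and> z t \<in> ball (y s) e"
    using e s(2) unfolding continuous_within_eps_delta
    by (metis dist_commute mem_ball min_less_iff_conj)
  define h where "h = min d (1 / (2 * (L + 1)))"
  have h: "h > 0" "h * L \<le> 1 / 2"
    using d L0 by (auto simp: h_def min_def field_simps)
  have "y t = z t" if t: "t \<in> I" "dist t s < h" for t
  proof -
    define K where "K = closed_segment s t"
    have K: "K \<subseteq> I" "\<And>u. u \<in> K \<Longrightarrow> dist u s < h"
      using I s(1) t unfolding K_def is_interval_convex_1
      by (auto simp: closed_segment_subset) (auto simp: dist_real_def closed_segment_eq_real_ivl split: if_splits)
    have "continuous_on K (\<lambda>u. norm (y u - z u))"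
      using y z K(1) by (intro continuous_intros continuous_on_vector_derivative) (auto intro: has_vector_derivative_within_subset)
    then obtain m where m: "m \<in> K" "\<And>u. u \<in> K \<Longrightarrow> norm (y u - z u) \<le> norm (y m - z m)"
      using continuous_attains_sup[of K] unfolding K_def by fastforce
    define M where "M = norm (y m - z m)"
    have "norm (y u - z u) \<le> h * L * M" if u: "u \<in> K" for u
    proof -
      have "norm ((y u - z u) - (y s - z s) - (u - s) *\<^sub>R (F (y s) - F (z s))) \<le> norm (u - s) * (L * M)"
      proof (rule vector_differentiable_bound_linearization)
        show "((\<lambda>u. y u - z u) has_vector_derivative F (y v) - F (z v)) (at v within K)" if "v \<in> K" for v
          using y z that K(1) by (auto intro!: derivative_intros intro: has_vector_derivative_within_subset)
        show "norm (F (y v) - F (z v) - (F (y s) - F (z s))) \<le> L * M" if v: "v \<in> K" for v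
        proof -
          have "norm (F (y v) - F (z v)) \<le> L * norm (y v - z v)"
            using lipschitz_on_normD[OF L] d(2)[of v] K v h_def by force
          also have "\<dots> \<le> L * M" using m(2)[OF v] L0 unfolding M_def by (rule mult_left_mono)
          finally show ?thesis using s(2) by simp
        qed
      qed (use u in \<open>auto simp: K_def subset_closed_segment\<close>)
      then have "norm (y u - z u) \<le> norm (u - s) * (L * M)" using s(2) by simp
      also have "\<dots> \<le> h * (L * M)"
        using K(2)[OF u] L0 by (intro mult_right_mono) (auto simp: dist_real_def M_def)
      finally show ?thesis by (simp add: mult.assoc)
    qed
    then have "M \<le> h * L * M"
      using m(1) unfolding M_def by blast
    also have "\<dots> \<le> M / 2"
      using mult_right_mono[OF h(2), of M] by (simp add: M_def)
    finally have "M \<le> 0" by simp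
    then have "norm (y t - z t) \<le> 0"
      using m(2)[of t] unfolding K_def M_def by simp
    then show ?thesis by simp
  qed
  then show ?thesis using h(1) by blast
qed

lemma ode_solutions_unique:
  fixes y z :: "real \<Rightarrow> 'a::real_normed_vector"
  assumes I: "is_interval I"
    and y: "\<And>t. t \<in> I \<Longrightarrow> (y has_vector_derivative F (y t)) (at t within I)"
    and z: "\<And>t. t \<in> I \<Longrightarrow> (z has_vector_derivative F (z t)) (at t within I)"
    and lip: "\<And>t. t \<in> I \<Longrightarrow> locally_lipschitz_at F (y t)"
    and t0: "t0 \<in> I" "y t0 = z t0" and t: "t \<in> I"
  shows "y t = z t"
proof -
  let ?E = "{u \<in> I. y u = z u}"
  have "continuous_on I (\<lambda>u. y u - z u)"
    using y z by (intro continuous_intros continuous_on_vector_derivative) auto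
  then have "closedin (top_of_set I) ?E"
    using continuous_closedin_preimage_constant[of I "\<lambda>u. y u - z u" 0] by simp
  moreover have "openin (top_of_set I) ?E"
    unfolding openin_euclidean_subtopology_iff
    using ode_solutions_agree_near[OF I y z lip] by (fastforce simp: dist_commute)
  moreover have "connected I" using I by (simp add: is_interval_connected)
  ultimately have "?E = I" using t0 unfolding connected_clopen by blast
  then show ?thesis using t by blast
qed

lemma has_vector_derivative_unique_on_open:
  assumes "open S" "S \<subseteq> I" "t \<in> S" "\<And>s. s \<in> S \<Longrightarrow> f s = g s"
    and "(f has_vector_derivative f') (at t within I)" "(g has_vector_derivative g') (at t within I)"
  shows "f' = g'"
proof -
  have "at t within I = at t"
    using assms(1-3) by (intro at_within_interior) (meson interior_maximal subsetD)
  then show ?thesis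
    using assms has_vector_derivative_transform_within_open[of f f' t S g]
    by (metis vector_derivative_unique_at)
qed

lemma linear_image_of_derivative_vanishes:
  assumes "bounded_linear L" "open S" "S \<subseteq> I" "t \<in> S" "\<And>s. s \<in> S \<Longrightarrow> L (f s) = 0"
    and "(f has_vector_derivative f') (at t within I)"
  shows "L f' = 0"
  using has_vector_derivative_unique_on_open[OF assms(2-4), of "\<lambda>s. L (f s)" "\<lambda>_. 0"] assms(5,6)
    bounded_linear.has_vector_derivative[OF assms(1)] by auto

lemma subinterval_where_one_vanishes:
  fixes f g :: "real \<Rightarrow> real"
  assumes "a < b" "continuous_on {a<..<b} f" "\<And>t. t \<in> {a<..<b} \<Longrightarrow> f t = 0 \<or> g t = 0"
  obtains a' b' where "a' < b'" "{a'<..<b'} \<subseteq> {a<..<b}"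
    "(\<forall>t\<in>{a'<..<b'}. f t = 0) \<or> (\<forall>t\<in>{a'<..<b'}. g t = 0)"
proof (cases "\<forall>t\<in>{a<..<b}. f t = 0")
  case True
  then show ?thesis using that assms(1) by blast
next
  case False
  then obtain t where t: "t \<in> {a<..<b}" "f t \<noteq> 0" by blast
  have "open ({a<..<b} \<inter> f -` (- {0}))"
    using assms(2) by (intro continuous_open_preimage) auto
  moreover have "t \<in> {a<..<b} \<inter> f -` (- {0})"
    using t by simp
  ultimately obtain d where d: "d > 0" "ball t d \<subseteq> {a<..<b} \<inter> f -` (- {0})"
    unfolding open_contains_ball by blast
  have ball: "{t - d<..<t + d} = ball t d"
    by (auto simp: dist_real_def)
  have "g s = 0" if "s \<in> {t - d<..<t + d}" for s
  proof -
    have "s \<in> {a<..<b}" "f s \<noteq> 0"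
      using that d(2) unfolding ball by auto
    then show ?thesis using assms(3) by blast
  qed
  moreover have "t - d < t + d" "{t - d<..<t + d} \<subseteq> {a<..<b}"
    using d unfolding ball by auto
  ultimately show ?thesis using that by blast
qed

definition inverse_square_field :: "'a::real_normed_vector \<Rightarrow> 'a" where
  "inverse_square_field x = (1 / norm x ^ 3) *\<^sub>R x"

lemma force_eq_inverse_square_field:
  "force x y z = inverse_square_field (y - x) + inverse_square_field (z - x)"
  by (simp add: force_def inverse_square_field_def scaleR_conv_of_real divide_inverse mult.commute)

lemma abs_cube_diff_le:
  fixes x y M :: real
  assumes "\<bar>x\<bar> \<le> M" "\<bar>y\<bar> \<le> M"
  shows "\<bar>x ^ 3 - y ^ 3\<bar> \<le> 3 * M\<^sup>2 * \<bar>x - y\<bar>"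
proof -
  have "x ^ 3 - y ^ 3 = (x - y) * (x\<^sup>2 + x * y + y\<^sup>2)"
    by (simp add: algebra_simps power2_eq_square power3_eq_cube)
  moreover have "\<bar>x\<^sup>2 + x * y + y\<^sup>2\<bar> \<le> 3 * M\<^sup>2"
  proof -
    have "\<bar>x\<bar>\<^sup>2 \<le> M\<^sup>2" "\<bar>y\<bar>\<^sup>2 \<le> M\<^sup>2"
      using power_mono[OF assms(1) abs_ge_zero, of 2] power_mono[OF assms(2) abs_ge_zero, of 2] by simp_all
    moreover have "\<bar>x\<bar> * \<bar>y\<bar> \<le> M * M"
      using assms by (intro mult_mono) auto
    ultimately have "x\<^sup>2 \<le> M\<^sup>2" "y\<^sup>2 \<le> M\<^sup>2" "\<bar>x * y\<bar> \<le> M\<^sup>2"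
      by (simp_all add: abs_mult power2_eq_square)
    then show ?thesis by (simp add: abs_le_iff) (smt (verit) zero_le_power2)
  qed
  ultimately show ?thesis
    by (simp add: abs_mult mult.commute mult_left_mono)
qed

lemma inverse_square_field_lipschitz_on_annulus:
  assumes "0 < m" "m \<le> M"
  shows "(1 / m ^ 3 + 3 * M ^ 3 / m ^ 6)-lipschitz_on {x. m \<le> norm x \<and> norm x \<le> M}
           (inverse_square_field :: 'a::real_normed_vector \<Rightarrow> 'a)"
proof (rule lipschitz_onI)
  fix a b :: 'a
  assume "a \<in> {x. m \<le> norm x \<and> norm x \<le> M}" "b \<in> {x. m \<le> norm x \<and> norm x \<le> M}"
  then have a: "m \<le> norm a" "norm a \<le> M" and b: "m \<le> norm b" "norm b \<le> M" by auto
  have ab: "0 < norm a" "0 < norm b" using a b assms by auto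
  have "inverse_square_field a - inverse_square_field b =
      (1 / norm a ^ 3) *\<^sub>R (a - b) + ((norm b ^ 3 - norm a ^ 3) / (norm a ^ 3 * norm b ^ 3)) *\<^sub>R b"
  proof -
    have "1 / norm a ^ 3 - 1 / norm b ^ 3 = (norm b ^ 3 - norm a ^ 3) / (norm a ^ 3 * norm b ^ 3)"
      using ab by (simp add: field_simps)
    moreover have "inverse_square_field a - inverse_square_field b =
        (1 / norm a ^ 3) *\<^sub>R (a - b) + (1 / norm a ^ 3 - 1 / norm b ^ 3) *\<^sub>R b"
      by (simp add: inverse_square_field_def algebra_simps)
    ultimately show ?thesis by simp
  qed
  moreover have "norm ((1 / norm a ^ 3) *\<^sub>R (a - b)) \<le> 1 / m ^ 3 * norm (a - b)"
    using a assms by (simp add: divide_right_mono frac_le mult_right_mono power_mono)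
  moreover have "norm (((norm b ^ 3 - norm a ^ 3) / (norm a ^ 3 * norm b ^ 3)) *\<^sub>R b)
      \<le> 3 * M ^ 3 / m ^ 6 * norm (a - b)"
  proof -
    have "\<bar>norm b ^ 3 - norm a ^ 3\<bar> \<le> 3 * M\<^sup>2 * norm (a - b)"
      using abs_cube_diff_le[of "norm b" M "norm a"] a b norm_triangle_ineq3[of b a]
      by (smt (verit, best) mult_left_mono norm_minus_commute zero_le_power2 norm_ge_zero)
    moreover have "m ^ 6 \<le> norm a ^ 3 * norm b ^ 3"
    proof -
      have "m ^ 3 * m ^ 3 \<le> norm a ^ 3 * norm b ^ 3"
        using a b assms by (intro mult_mono power_mono) auto
      then show ?thesis by (simp flip: power_add)
    qed
    ultimately have "\<bar>norm b ^ 3 - norm a ^ 3\<bar> / (norm a ^ 3 * norm b ^ 3) \<le> 3 * M\<^sup>2 * norm (a - b) / m ^ 6"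
      using assms by (intro frac_le) auto
    then have "norm b * (\<bar>norm b ^ 3 - norm a ^ 3\<bar> / (norm a ^ 3 * norm b ^ 3))
        \<le> M * (3 * M\<^sup>2 * norm (a - b) / m ^ 6)"
      using b assms by (intro mult_mono) auto
    moreover have "norm (((norm b ^ 3 - norm a ^ 3) / (norm a ^ 3 * norm b ^ 3)) *\<^sub>R b)
        = norm b * (\<bar>norm b ^ 3 - norm a ^ 3\<bar> / (norm a ^ 3 * norm b ^ 3))"
      using ab by (simp add: abs_divide abs_mult)
    moreover have "M * (3 * M\<^sup>2 * norm (a - b) / m ^ 6) = 3 * M ^ 3 / m ^ 6 * norm (a - b)"
      by (simp add: power2_eq_square power3_eq_cube)
    ultimately show ?thesis by linarith
  qed
  ultimately show "dist (inverse_square_field a) (inverse_square_field b)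
      \<le> (1 / m ^ 3 + 3 * M ^ 3 / m ^ 6) * dist a b"
    unfolding dist_norm by (smt (verit) norm_triangle_ineq distrib_right)
qed (use assms in auto)

lemma locally_lipschitz_at_inverse_square_field:
  fixes x :: "'a::real_normed_vector"
  assumes "x \<noteq> 0"
  shows "locally_lipschitz_at inverse_square_field x"
proof -
  define m M where "m = norm x / 2" and "M = 3 * norm x / 2"
  have "ball x m \<subseteq> {y. m \<le> norm y \<and> norm y \<le> M}"
    using norm_triangle_ineq2[of x] norm_triangle_ineq3[of _ x]
    by (auto simp: m_def M_def dist_norm norm_minus_commute)
      (smt (verit, best) norm_triangle_ineq2 norm_minus_commute)+
  moreover have "0 < m" "m \<le> M" using assms by (auto simp: m_def M_def)
  ultimately show ?thesis
    unfolding locally_lipschitz_at_def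
    using inverse_square_field_lipschitz_on_annulus lipschitz_on_subset by blast
qed

definition collision_free :: "complex \<Rightarrow> complex \<Rightarrow> complex \<Rightarrow> bool" where
  "collision_free x1 x2 x3 \<longleftrightarrow> x1 \<noteq> x2 \<and> x1 \<noteq> x3 \<and> x2 \<noteq> x3"

type_synonym configuration = "complex \<times> complex \<times> complex"

definition newton_vector_field :: "configuration \<times> configuration \<Rightarrow> configuration \<times> configuration" where
  "newton_vector_field = (\<lambda>((x1, x2, x3), v). (v, (force x1 x2 x3, force x2 x1 x3, force x3 x1 x2)))"

definition newtonian_motion :: "real set \<Rightarrow> (real \<Rightarrow> complex) \<Rightarrow> (real \<Rightarrow> complex) \<Rightarrow> (real \<Rightarrow> complex)
    \<Rightarrow> (real \<Rightarrow> complex) \<Rightarrow> (real \<Rightarrow> complex) \<Rightarrow> (real \<Rightarrow> complex) \<Rightarrow> bool" where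
  "newtonian_motion I q1 q2 q3 v1 v2 v3 \<longleftrightarrow> (\<forall>t\<in>I.
     (q1 has_vector_derivative v1 t) (at t within I) \<and>
     (q2 has_vector_derivative v2 t) (at t within I) \<and>
     (q3 has_vector_derivative v3 t) (at t within I) \<and>
     (v1 has_vector_derivative force (q1 t) (q2 t) (q3 t)) (at t within I) \<and>
     (v2 has_vector_derivative force (q2 t) (q1 t) (q3 t)) (at t within I) \<and>
     (v3 has_vector_derivative force (q3 t) (q1 t) (q2 t)) (at t within I))"

lemma locally_lipschitz_at_inverse_square_field_linear:
  assumes "bounded_linear L" "L w \<noteq> 0"
  shows "locally_lipschitz_at (\<lambda>w. inverse_square_field (L w)) w"
  using locally_lipschitz_at_compose[OF bounded_linear.locally_lipschitz_at[OF assms(1)]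
      locally_lipschitz_at_inverse_square_field[OF assms(2)]] .

lemma locally_lipschitz_at_inverse_square_field_sum:
  assumes "bounded_linear L1" "bounded_linear L2" "L1 w \<noteq> 0" "L2 w \<noteq> 0"
  shows "locally_lipschitz_at (\<lambda>w. inverse_square_field (L1 w) + inverse_square_field (L2 w)) w"
  using locally_lipschitz_at_add[OF locally_lipschitz_at_inverse_square_field_linear[OF assms(1,3)]
      locally_lipschitz_at_inverse_square_field_linear[OF assms(2,4)]] .

lemma locally_lipschitz_at_newton_vector_field:
  assumes "collision_free x1 x2 x3"
  shows "locally_lipschitz_at newton_vector_field ((x1, x2, x3), v)"
proof -
  let ?p1 = "\<lambda>w::configuration \<times> configuration. fst (fst w)"
  let ?p2 = "\<lambda>w::configuration \<times> configuration. fst (snd (fst w))"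
  let ?p3 = "\<lambda>w::configuration \<times> configuration. snd (snd (fst w))"
  have lin: "bounded_linear (\<lambda>w. ?p2 w - ?p1 w)" "bounded_linear (\<lambda>w. ?p3 w - ?p1 w)"
    "bounded_linear (\<lambda>w. ?p1 w - ?p2 w)" "bounded_linear (\<lambda>w. ?p3 w - ?p2 w)"
    "bounded_linear (\<lambda>w. ?p1 w - ?p3 w)" "bounded_linear (\<lambda>w. ?p2 w - ?p3 w)"
    "bounded_linear (\<lambda>w::configuration \<times> configuration. snd w)"
    by (intro bounded_linear_sub bounded_linear_compose[OF bounded_linear_fst]
        bounded_linear_compose[OF bounded_linear_snd] bounded_linear_fst bounded_linear_snd)+
  have field: "newton_vector_field = (\<lambda>w. (snd w,
      inverse_square_field (?p2 w - ?p1 w) + inverse_square_field (?p3 w - ?p1 w),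
      inverse_square_field (?p1 w - ?p2 w) + inverse_square_field (?p3 w - ?p2 w),
      inverse_square_field (?p1 w - ?p3 w) + inverse_square_field (?p2 w - ?p3 w)))"
    by (intro ext) (simp add: newton_vector_field_def force_eq_inverse_square_field case_prod_beta)
  have "x1 \<noteq> x2" "x1 \<noteq> x3" "x2 \<noteq> x3"
    using assms by (auto simp: collision_free_def)
  then show ?thesis
    unfolding field
    by (intro locally_lipschitz_at_Pair bounded_linear.locally_lipschitz_at[OF lin(7)]
        locally_lipschitz_at_inverse_square_field_sum[OF lin(1,2)]
        locally_lipschitz_at_inverse_square_field_sum[OF lin(3,4)]
        locally_lipschitz_at_inverse_square_field_sum[OF lin(5,6)]) auto
qed

lemma newtonian_motion_has_state_derivative:
  assumes "newtonian_motion I q1 q2 q3 v1 v2 v3" "t \<in> I"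
  shows "((\<lambda>t. ((q1 t, q2 t, q3 t), (v1 t, v2 t, v3 t))) has_vector_derivative
           newton_vector_field ((q1 t, q2 t, q3 t), (v1 t, v2 t, v3 t))) (at t within I)"
  using assms by (auto simp: newtonian_motion_def newton_vector_field_def intro!: has_vector_derivative_Pair)

lemma newtonian_motion_unique:
  assumes I: "is_interval I"
    and q: "newtonian_motion I q1 q2 q3 v1 v2 v3" and p: "newtonian_motion I p1 p2 p3 w1 w2 w3"
    and cf: "\<And>t. t \<in> I \<Longrightarrow> collision_free (q1 t) (q2 t) (q3 t)"
    and t0: "t0 \<in> I" "q1 t0 = p1 t0" "q2 t0 = p2 t0" "q3 t0 = p3 t0"
      "v1 t0 = w1 t0" "v2 t0 = w2 t0" "v3 t0 = w3 t0"
    and t: "t \<in> I"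
  shows "q1 t = p1 t \<and> q2 t = p2 t \<and> q3 t = p3 t"
proof -
  let ?y = "\<lambda>t. ((q1 t, q2 t, q3 t), (v1 t, v2 t, v3 t))"
  let ?z = "\<lambda>t. ((p1 t, p2 t, p3 t), (w1 t, w2 t, w3 t))"
  have "?y t = ?z t"
    by (rule ode_solutions_unique[OF I newtonian_motion_has_state_derivative[OF q]
          newtonian_motion_has_state_derivative[OF p] locally_lipschitz_at_newton_vector_field[OF cf]])
      (use t0 t in auto)
  then show ?thesis by simp
qed

lemma newtonian_motion_continuous_on:
  "newtonian_motion I q1 q2 q3 v1 v2 v3 \<Longrightarrow> continuous_on I q1 \<and> continuous_on I q2 \<and> continuous_on I q3"
  by (auto simp: newtonian_motion_def intro!: continuous_on_vector_derivative)

lemma newtonian_motion_eq_on_subinterval: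
  assumes I: "is_interval I"
    and q: "newtonian_motion I q1 q2 q3 v1 v2 v3" and p: "newtonian_motion I p1 p2 p3 w1 w2 w3"
    and cf: "\<And>t. t \<in> I \<Longrightarrow> collision_free (q1 t) (q2 t) (q3 t)"
    and ab: "a < b" "{a<..<b} \<subseteq> I"
    and eq: "\<And>s. s \<in> {a<..<b} \<Longrightarrow> q1 s = p1 s \<and> q2 s = p2 s \<and> q3 s = p3 s"
    and t: "t \<in> I"
  shows "q1 t = p1 t \<and> q2 t = p2 t \<and> q3 t = p3 t"
proof -
  define t0 where "t0 = (a + b) / 2"
  have t0: "t0 \<in> {a<..<b}" using ab(1) by (simp add: t0_def)
  note velocity_eq = has_vector_derivative_unique_on_open[OF open_greaterThanLessThan ab(2) t0]
  have "v1 t0 = w1 t0" "v2 t0 = w2 t0" "v3 t0 = w3 t0"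
    by (rule velocity_eq; use eq q p t0 ab(2) in \<open>force simp: newtonian_motion_def\<close>)+
  then show ?thesis
    using newtonian_motion_unique[OF I q p cf] t0 ab(2) eq[OF t0] t by blast
qed

lemma inverse_square_field_isometry:
  assumes "linear R" "\<And>x. norm (R x) = norm x"
  shows "inverse_square_field (R x) = R (inverse_square_field x)"
  using assms by (simp add: inverse_square_field_def linear_scale)

lemma force_isometry:
  assumes "linear R" "\<And>x. norm (R x) = norm x"
  shows "force (R x) (R y) (R z) = R (force x y z)"
  using assms by (simp add: force_eq_inverse_square_field inverse_square_field_isometry
      linear_diff linear_add flip: linear_diff)

lemma newtonian_motion_isometry:
  assumes "bounded_linear R" "\<And>x. norm (R x) = norm x" "newtonian_motion I q1 q2 q3 v1 v2 v3"
  shows "newtonian_motion I (\<lambda>t. R (q1 t)) (\<lambda>t. R (q2 t)) (\<lambda>t. R (q3 t))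
           (\<lambda>t. R (v1 t)) (\<lambda>t. R (v2 t)) (\<lambda>t. R (v3 t))"
  using assms(3)
  unfolding newtonian_motion_def force_isometry[OF bounded_linear.linear[OF assms(1)] assms(2)]
  by (blast intro: bounded_linear.has_vector_derivative[OF assms(1)])

lemma newtonian_motion_swap:
  "newtonian_motion I q1 q2 q3 v1 v2 v3 \<Longrightarrow> newtonian_motion I q2 q1 q3 v2 v1 v3"
  by (auto simp: newtonian_motion_def force_def add.commute)

lemma jacobi_vector_on_axis_of_equal_vertical_forces:
  assumes "x1 \<noteq> x2" "x1 + x2 + x3 = 0" "Im x1 = Im x2"
    and "Im (force x1 x2 x3) = Im (force x2 x1 x3)"
  shows "Im (x3 - (x1 + x2) / 2) = 0 \<or> Re (x3 - (x1 + x2) / 2) = 0"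
proof (cases "Im x1 = 0")
  case True
  then show ?thesis using assms(2,3) by (simp add: complex_eq_iff)
next
  case False
  have Im3: "Im x3 = - 2 * Im x1" and Re3: "Re x3 = - Re x1 - Re x2"
    using arg_cong[OF assms(2), of Im] arg_cong[OF assms(2), of Re] assms(3) by simp_all
  have "Im (force x1 x2 x3) = - 3 * Im x1 / cmod (x3 - x1) ^ 3"
    "Im (force x2 x1 x3) = - 3 * Im x1 / cmod (x3 - x2) ^ 3"
    using Im3 assms(3) by (simp_all add: force_def)
  then have "cmod (x3 - x1) ^ 3 = cmod (x3 - x2) ^ 3"
    using assms(4) False by (simp add: divide_cancel_left)
  then have "cmod (x3 - x1) = cmod (x3 - x2)"
    by (simp add: power_eq_iff_eq_base)
  then have "(Re x3 - Re x1)\<^sup>2 = (Re x3 - Re x2)\<^sup>2"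
    using assms(3) by (simp add: cmod_def)
  then have "(Re x1 - Re x2) * (2 * Re x3 - Re x1 - Re x2) = 0"
    by (simp add: algebra_simps power2_eq_square)
  moreover have "Re x1 \<noteq> Re x2"
    using assms(1,3) by (simp add: complex_eq_iff)
  ultimately show ?thesis
    using Re3 by simp
qed

lemma configuration_eq_cnj:
  assumes "x1 + x2 + x3 = 0" "Im (x1 - x2) = 0" "Im (x3 - (x1 + x2) / 2) = 0"
  shows "x1 = cnj x1 \<and> x2 = cnj x2 \<and> x3 = cnj x3"
  using assms arg_cong[OF assms(1), of Im] by (simp add: complex_eq_iff)

lemma configuration_eq_swapped_reflection:
  assumes "x1 + x2 + x3 = 0" "Im (x1 - x2) = 0" "Re (x3 - (x1 + x2) / 2) = 0"
  shows "x1 = - cnj x2 \<and> x2 = - cnj x1 \<and> x3 = - cnj x3"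
  using assms arg_cong[OF assms(1), of Re] by (simp add: complex_eq_iff)

lemma jacobi_vector_on_axis_where_relative_position_horizontal:
  assumes q: "newtonian_motion I q1 q2 q3 v1 v2 v3"
    and cf: "\<And>t. t \<in> I \<Longrightarrow> collision_free (q1 t) (q2 t) (q3 t)"
    and com: "\<And>t. t \<in> I \<Longrightarrow> q1 t + q2 t + q3 t = 0"
    and S: "open S" "S \<subseteq> I"
    and x_axis: "\<And>t. t \<in> S \<Longrightarrow> Im (q1 t - q2 t) = 0"
    and t: "t \<in> S"
  shows "Im (q3 t - (q1 t + q2 t) / 2) = 0 \<or> Re (q3 t - (q1 t + q2 t) / 2) = 0"
proof -
  note vanish = linear_image_of_derivative_vanishes[OF bounded_linear_Im S]
  have "Im (v1 s - v2 s) = 0" if "s \<in> S" for s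
    by (rule vanish[OF that x_axis]) (use q that S in \<open>auto simp: newtonian_motion_def intro!: derivative_intros\<close>)
  then have "Im (force (q1 t) (q2 t) (q3 t) - force (q2 t) (q1 t) (q3 t)) = 0"
    by (rule vanish[OF t]) (use q t S in \<open>auto simp: newtonian_motion_def intro!: derivative_intros\<close>)
  then show ?thesis
    using jacobi_vector_on_axis_of_equal_vertical_forces[of "q1 t" "q2 t" "q3 t"] cf com x_axis t S
    by (force simp: collision_free_def)
qed

lemma relative_position_on_x_axis_propagates:
  assumes I: "is_interval I"
    and q: "newtonian_motion I q1 q2 q3 v1 v2 v3"
    and cf: "\<And>t. t \<in> I \<Longrightarrow> collision_free (q1 t) (q2 t) (q3 t)"
    and com: "\<And>t. t \<in> I \<Longrightarrow> q1 t + q2 t + q3 t = 0"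
    and ab: "a < b" "{a<..<b} \<subseteq> I"
    and x_axis: "\<And>t. t \<in> {a<..<b} \<Longrightarrow> Im (q1 t - q2 t) = 0"
  shows "(\<forall>t\<in>I. Im (q1 t - q2 t) = 0) \<and>
         ((\<forall>t\<in>I. Im (q3 t - (q1 t + q2 t) / 2) = 0) \<or> (\<forall>t\<in>I. Re (q3 t - (q1 t + q2 t) / 2) = 0))"
proof -
  let ?Z2 = "\<lambda>t. q3 t - (q1 t + q2 t) / 2"
  have dichotomy: "Im (?Z2 t) = 0 \<or> Re (?Z2 t) = 0" if "t \<in> {a<..<b}" for t
    using jacobi_vector_on_axis_where_relative_position_horizontal[OF q cf com
        open_greaterThanLessThan ab(2) x_axis that] .
  have "continuous_on {a<..<b} (\<lambda>t. Im (?Z2 t))"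
    using newtonian_motion_continuous_on[OF q] ab(2)
    by (auto intro!: continuous_intros intro: continuous_on_subset)
  then obtain a' b' where a'b': "a' < b'" "{a'<..<b'} \<subseteq> {a<..<b}"
    and axis: "(\<forall>t\<in>{a'<..<b'}. Im (?Z2 t) = 0) \<or> (\<forall>t\<in>{a'<..<b'}. Re (?Z2 t) = 0)"
    using subinterval_where_one_vanishes[of a b "\<lambda>t. Im (?Z2 t)" "\<lambda>t. Re (?Z2 t)"] ab(1) dichotomy
    by blast
  have sub: "{a'<..<b'} \<subseteq> I"
    using a'b'(2) ab(2) by (rule order.trans)
  from axis consider "\<forall>t\<in>{a'<..<b'}. Im (?Z2 t) = 0" | "\<forall>t\<in>{a'<..<b'}. Re (?Z2 t) = 0"
    by blast
  then show ?thesis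
  proof cases
    case 1
    have "q1 t = cnj (q1 t) \<and> q2 t = cnj (q2 t) \<and> q3 t = cnj (q3 t)" if "t \<in> I" for t
      by (rule newtonian_motion_eq_on_subinterval[OF I q
            newtonian_motion_isometry[OF bounded_linear_cnj complex_mod_cnj q] cf a'b'(1) sub _ that])
        (use 1 a'b'(2) sub configuration_eq_cnj[OF com x_axis] in blast)+
    then show ?thesis by (auto simp: complex_eq_iff)
  next
    case 2
    have norm_minus_cnj: "norm (- cnj z) = norm z" for z by simp
    have components: "Re x = - Re y \<and> Im x = Im y" if "x = - cnj y" for x y
      using that by simp
    have "q1 t = - cnj (q2 t) \<and> q2 t = - cnj (q1 t) \<and> q3 t = - cnj (q3 t)" if "t \<in> I" for t
      by (rule newtonian_motion_eq_on_subinterval[OF I q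
            newtonian_motion_isometry[OF bounded_linear_minus[OF bounded_linear_cnj] norm_minus_cnj
              newtonian_motion_swap[OF q]]
            cf a'b'(1) sub _ that])
        (use 2 a'b'(2) sub configuration_eq_swapped_reflection[OF com x_axis] in blast)+
    then have "Re (q1 t) = - Re (q2 t) \<and> Im (q1 t) = Im (q2 t)" "Re (q3 t) = - Re (q3 t)" if "t \<in> I" for t
      using components that by blast+
    then show ?thesis by simp
  qed
qed

lemma relative_position_on_y_axis_propagates:
  assumes I: "is_interval I"
    and q: "newtonian_motion I q1 q2 q3 v1 v2 v3"
    and cf: "\<And>t. t \<in> I \<Longrightarrow> collision_free (q1 t) (q2 t) (q3 t)"
    and com: "\<And>t. t \<in> I \<Longrightarrow> q1 t + q2 t + q3 t = 0"
    and ab: "a < b" "{a<..<b} \<subseteq> I"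
    and y_axis: "\<And>t. t \<in> {a<..<b} \<Longrightarrow> Re (q1 t - q2 t) = 0"
  shows "(\<forall>t\<in>I. Re (q1 t - q2 t) = 0) \<and>
         ((\<forall>t\<in>I. Re (q3 t - (q1 t + q2 t) / 2) = 0) \<or> (\<forall>t\<in>I. Im (q3 t - (q1 t + q2 t) / 2) = 0))"
proof -
  have "newtonian_motion I (\<lambda>t. \<i> * q1 t) (\<lambda>t. \<i> * q2 t) (\<lambda>t. \<i> * q3 t)
      (\<lambda>t. \<i> * v1 t) (\<lambda>t. \<i> * v2 t) (\<lambda>t. \<i> * v3 t)"
    using newtonian_motion_isometry[OF bounded_linear_mult_right _ q] by (simp add: norm_mult)
  moreover have "collision_free (\<i> * q1 t) (\<i> * q2 t) (\<i> * q3 t)" if "t \<in> I" for t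
    using cf[OF that] by (simp add: collision_free_def)
  moreover have "\<i> * q1 t + \<i> * q2 t + \<i> * q3 t = 0" if "t \<in> I" for t
    using com[OF that] by (simp flip: distrib_left)
  ultimately have "(\<forall>t\<in>I. Im (\<i> * q1 t - \<i> * q2 t) = 0) \<and>
      ((\<forall>t\<in>I. Im (\<i> * q3 t - (\<i> * q1 t + \<i> * q2 t) / 2) = 0) \<or>
       (\<forall>t\<in>I. Re (\<i> * q3 t - (\<i> * q1 t + \<i> * q2 t) / 2) = 0))"
    by (rule relative_position_on_x_axis_propagates[OF I _ _ _ ab]) (use y_axis in auto)
  then show ?thesis by auto
qed

theorem proposition5p6:
  fixes q1 q2 q3 v1 v2 v3 :: "real \<Rightarrow> complex"
  assumes adm: "admissible q1 q2 q3"
    and minimizer: "\<And>p1 p2 p3. admissible p1 p2 p3 \<Longrightarrow> action q1 q2 q3 \<le> action p1 p2 p3"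
    and collision_free: "\<And>t. t \<in> {0<..1} \<Longrightarrow>
            q1 t \<noteq> q2 t \<and> q1 t \<noteq> q3 t \<and> q2 t \<noteq> q3 t"
    and vel: "\<And>t. t \<in> {0<..1} \<Longrightarrow>
            (q1 has_vector_derivative v1 t) (at t within {0..1}) \<and>
            (q2 has_vector_derivative v2 t) (at t within {0..1}) \<and>
            (q3 has_vector_derivative v3 t) (at t within {0..1})"
    and newton: "\<And>t. t \<in> {0<..1} \<Longrightarrow>
            (v1 has_vector_derivative force (q1 t) (q2 t) (q3 t)) (at t within {0..1}) \<and>
            (v2 has_vector_derivative force (q2 t) (q1 t) (q3 t)) (at t within {0..1}) \<and>
            (v3 has_vector_derivative force (q3 t) (q1 t) (q2 t)) (at t within {0..1})"
    and on_axis: "\<exists>t1 t2. 0 < t1 \<and> t1 < t2 \<and> t2 \<le> 1 \<and>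
            ((\<forall>t\<in>{t1..t2}. on_x_axis (q1 t - q2 t)) \<or>
             (\<forall>t\<in>{t1..t2}. on_y_axis (q1 t - q2 t)))"
  shows "((\<forall>t\<in>{0<..1}. on_x_axis (q1 t - q2 t)) \<or>
          (\<forall>t\<in>{0<..1}. on_y_axis (q1 t - q2 t))) \<and>
         ((\<forall>t\<in>{0<..1}. on_x_axis (q3 t - (q1 t + q2 t) / 2)) \<or>
          (\<forall>t\<in>{0<..1}. on_y_axis (q3 t - (q1 t + q2 t) / 2)))"
proof -
  let ?I = "{0<..1::real}"
  have I: "is_interval ?I" by (simp add: is_interval_convex_1)
  have restrict: "(f has_vector_derivative f') (at t within ?I)"
    if "(f has_vector_derivative f') (at t within {0..1})" for f :: "real \<Rightarrow> complex" and f' t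
    using that by (rule has_vector_derivative_within_subset) auto
  have q: "newtonian_motion ?I q1 q2 q3 v1 v2 v3"
    using vel newton by (simp add: newtonian_motion_def restrict)
  have cf: "\<And>t. t \<in> ?I \<Longrightarrow> collision_free (q1 t) (q2 t) (q3 t)"
    using collision_free by (simp add: collision_free_def)
  have com: "\<And>t. t \<in> ?I \<Longrightarrow> q1 t + q2 t + q3 t = 0"
    using adm by (auto simp: admissible_def)
  obtain t1 t2 where t12: "t1 < t2" "{t1<..<t2} \<subseteq> ?I"
    and "(\<forall>t\<in>{t1<..<t2}. Im (q1 t - q2 t) = 0) \<or> (\<forall>t\<in>{t1<..<t2}. Re (q1 t - q2 t) = 0)"
    using on_axis unfolding on_x_axis_def on_y_axis_def by fastforce
  then show ?thesis
    using relative_position_on_x_axis_propagates[OF I q cf com t12]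
      relative_position_on_y_axis_propagates[OF I q cf com t12]
    unfolding on_x_axis_def on_y_axis_def by blast
qed

end
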